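(* Let $N\ge3$ and let $([v_{ij}:v_{ji}])_{1\le i<j\le N}$ be common lines data such that every triple $(i,j,k)$ of distinct indices strictly satisfies the spherical triangle inequalities, and such that $L_{ijk,ijm}=0$ for all pairwise distinct indices $i,j,k,m$. Then there exist generic frames $F_1,\dots,F_N$ realizing the data, i.e. with $\iota_i(v_{ij})=\iota_j(v_{ji})$ for all $i\neq j$, and they are unique up to the diagonal action of $\mathrm O(3)$.
   Context: A frame is an ordered pair $(a,b)$ of orthonormal vectors in $\mathbb R^3$. Planes $P_1=\dots=P_N=\mathbb R^2$; a frame $F_i=(a_i,b_i)$ gives the embedding $\iota_i:P_i\to\mathbb R^3$, $\iota_i(x,y)=xa_i+yb_i$. Frames $F_1,\dots,F_N$ are generic if the planes $\iota_i(P_i)$ are pairwise distinct and the lines $\iota_i(P_i)\cap\iota_j(P_j)$, $i<j$, are pairwise distinct. $\mathrm O(3)$ is the group of all $3\times3$ orthogonal matrices, acting by $A\cdot(F_1,\dots,F_N)=(AF_1,\dots,AF_N)$, $A(a,b)=(Aa,Ab)$. Common lines data is a collection $([v_{ij}:v_{ji}])_{1\le i<j\le N}$ of elements of $\mathbb P(P_i\times P_j)$ (nonzero pairs $(v_{ij},v_{ji})\in\mathbb R^2\times\mathbb R^2$ up to nonzero scaling) with $\|v_{ij}\|^2=\|v_{ji}\|^2$; indices of a pair may be written in either order. For a triple and representatives, $\alpha_{ijk}=\cos^{-1}\frac{v_{ij}\cdot v_{ik}}{\|v_{ij}\|\|v_{ik}\|}$, $\beta_{ijk}=\cos^{-1}\frac{v_{ji}\cdot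 v_{jk}}{\|v_{ji}\|\|v_{jk}\|}$, $\gamma_{ijk}=\cos^{-1}\frac{v_{ki}\cdot v_{kj}}{\|v_{ki}\|\|v_{kj}\|}$; the triple strictly satisfies the spherical triangle inequalities if for any representatives $\beta+\gamma>\alpha$, $\alpha+\gamma>\beta$, $\alpha+\beta>\gamma$, $\alpha+\beta+\gamma<2\pi$. For pairwise distinct $i,j,k,m$ and unit-norm representatives, $L_{ijk,ijm}=\big(v_{ki}\cdot v_{kj}-(v_{ij}\cdot v_{ik})(v_{ji}\cdot v_{jk})\big)|\det[v_{ij},v_{im}]\det[v_{ji},v_{jm}]|-\sigma\big(v_{mi}\cdot v_{mj}-(v_{ij}\cdot v_{im})(v_{ji}\cdot v_{jm})\big)|\det[v_{ij},v_{ik}]\det[v_{ji},v_{jk}]|$ with $\sigma=\operatorname{sign}(\det[v_{ij},v_{ik}]\det[v_{ij},v_{im}]\det[v_{ji},v_{jk}]\det[v_{ji},v_{jm}])$, where $\det[u,w]$ is the $2\times2$ determinant with columns $u,w$. *)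

theory Defs
  imports "HOL-Analysis.Analysis"
begin

text \<open>Common lines data is given by a fixed representative
  v i j (= v_ij) for every ordered pair of distinct indices.\<close>

definition det2 :: "real^2 \<Rightarrow> real^2 \<Rightarrow> real" where
  "det2 u w = u$1 * w$2 - u$2 * w$1"

definition ang :: "real^2 \<Rightarrow> real^2 \<Rightarrow> real" where
  "ang u w = arccos ((u \<bullet> w) / (norm u * norm w))"

definition sph_tri_strict :: "real \<Rightarrow> real \<Rightarrow> real \<Rightarrow> bool" where
  "sph_tri_strict \<alpha> \<beta> \<gamma> \<longleftrightarrow>
     \<beta> + \<gamma> > \<alpha> \<and> \<alpha> + \<gamma> > \<beta> \<and> \<alpha> + \<beta> > \<gamma> \<and> \<alpha> + \<beta> + \<gamma> < 2 * pi"

definition common_lines_data :: "nat \<Rightarrow> (nat \<Rightarrow> nat \<Rightarrow> real^2) \<Rightarrow> bool" where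
  "common_lines_data N v \<longleftrightarrow>
     (\<forall>i\<in>{1..N}. \<forall>j\<in>{1..N}. i \<noteq> j \<longrightarrow>
        (v i j, v j i) \<noteq> (0, 0) \<and> norm (v i j) ^ 2 = norm (v j i) ^ 2)"

text \<open>Strict spherical triangle inequalities for the triple (i,j,k), for ANY representatives:
  the pair [v_ij:v_ji] is rescaled by c_ij, [v_ik:v_ki] by c_ik, [v_jk:v_kj] by c_jk.\<close>
definition triple_strict :: "(nat \<Rightarrow> nat \<Rightarrow> real^2) \<Rightarrow> nat \<Rightarrow> nat \<Rightarrow> nat \<Rightarrow> bool" where
  "triple_strict v i j k \<longleftrightarrow>
     (\<forall>cij cik cjk :: real. cij \<noteq> 0 \<longrightarrow> cik \<noteq> 0 \<longrightarrow> cjk \<noteq> 0 \<longrightarrow>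
        sph_tri_strict
          (ang (cij *\<^sub>R v i j) (cik *\<^sub>R v i k))
          (ang (cij *\<^sub>R v j i) (cjk *\<^sub>R v j k))
          (ang (cik *\<^sub>R v k i) (cjk *\<^sub>R v k j)))"

definition unitv :: "(nat \<Rightarrow> nat \<Rightarrow> real^2) \<Rightarrow> nat \<Rightarrow> nat \<Rightarrow> real^2" where
  "unitv v i j = (1 / norm (v i j)) *\<^sub>R v i j"

definition Lval :: "(nat \<Rightarrow> nat \<Rightarrow> real^2) \<Rightarrow> nat \<Rightarrow> nat \<Rightarrow> nat \<Rightarrow> nat \<Rightarrow> real" where
  "Lval v i j k m =
     (let u = unitv v;
          \<sigma> = sgn (det2 (u i j) (u i k) * det2 (u i j) (u i m)
                    * det2 (u j i) (u j k) * det2 (u j i) (u j m))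
      in (u k i \<bullet> u k j - (u i j \<bullet> u i k) * (u j i \<bullet> u j k))
           * \<bar>det2 (u i j) (u i m) * det2 (u j i) (u j m)\<bar>
         - \<sigma> * (u m i \<bullet> u m j - (u i j \<bullet> u i m) * (u j i \<bullet> u j m))
           * \<bar>det2 (u i j) (u i k) * det2 (u j i) (u j k)\<bar>)"

definition is_frame :: "real^3 \<Rightarrow> real^3 \<Rightarrow> bool" where
  "is_frame a b \<longleftrightarrow> norm a = 1 \<and> norm b = 1 \<and> a \<bullet> b = 0"

definition embed :: "real^3 \<Rightarrow> real^3 \<Rightarrow> real^2 \<Rightarrow> real^3" where
  "embed a b p = p$1 *\<^sub>R a + p$2 *\<^sub>R b"

definition frames :: "nat \<Rightarrow> (nat \<Rightarrow> real^3) \<Rightarrow> (nat \<Rightarrow> real^3) \<Rightarrow> bool" where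
  "frames N a b \<longleftrightarrow> (\<forall>i\<in>{1..N}. is_frame (a i) (b i))"

definition plane :: "real^3 \<Rightarrow> real^3 \<Rightarrow> (real^3) set" where
  "plane a b = span {a, b}"

definition generic :: "nat \<Rightarrow> (nat \<Rightarrow> real^3) \<Rightarrow> (nat \<Rightarrow> real^3) \<Rightarrow> bool" where
  "generic N a b \<longleftrightarrow>
     (\<forall>i\<in>{1..N}. \<forall>j\<in>{1..N}. i \<noteq> j \<longrightarrow> plane (a i) (b i) \<noteq> plane (a j) (b j)) \<and>
     (\<forall>i\<in>{1..N}. \<forall>j\<in>{1..N}. \<forall>k\<in>{1..N}. \<forall>l\<in>{1..N}.
        i < j \<longrightarrow> k < l \<longrightarrow> (i, j) \<noteq> (k, l) \<longrightarrow>
        plane (a i) (b i) \<inter> plane (a j) (b j) \<noteq> plane (a k) (b k) \<inter> plane (a l) (b l))"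

definition realizes :: "nat \<Rightarrow> (nat \<Rightarrow> nat \<Rightarrow> real^2) \<Rightarrow> (nat \<Rightarrow> real^3) \<Rightarrow> (nat \<Rightarrow> real^3) \<Rightarrow> bool" where
  "realizes N v a b \<longleftrightarrow>
     (\<forall>i\<in>{1..N}. \<forall>j\<in>{1..N}. i \<noteq> j \<longrightarrow>
        embed (a i) (b i) (v i j) = embed (a j) (b j) (v j i))"

end

theory Submission
  imports Defs
begin

text \<open>After normalising the data to unit vectors, two frames glued along their common line can
  still rotate about it; the only remaining invariant is the cosine of the angle between their
  normals.  For three pairwise glued frames \<open>i, j, k\<close> the spherical law of cosines forces this
  cosine to be \<open>normal_cos u i j k\<close>, and the strict triangle inequalities say that this value lies
  in \<open>(-1, 1)\<close>, so every triangle is realizable.  The condition \<open>L = 0\<close> says exactly that the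
  cosine does not depend on the third index.  Hence one glues frames \<open>1\<close> and \<open>2\<close> at this angle,
  attaches each further frame to both of them, and the independence of the third index forces
  any two further frames to be glued to each other as well.  All mutual inner products of the frame
  vectors are then determined by the data, which gives uniqueness up to \<open>O(3)\<close>, and since the
  normals of distinct planes are never parallel, the realization is generic.\<close>

unbundle cross3_syntax

lemma frame_identities:
  assumes "is_frame a b"
  shows "a \<bullet> a = 1" "b \<bullet> b = 1" "a \<bullet> b = 0" "b \<bullet> a = 0"
    "(a \<times> b) \<bullet> a = 0" "(a \<times> b) \<bullet> b = 0" "a \<bullet> (a \<times> b) = 0" "b \<bullet> (a \<times> b) = 0"
    "(a \<times> b) \<times> a = b" "(a \<times> b) \<times> b = - a" "(a \<times> b) \<bullet> (a \<times> b) = 1"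
proof -
  have ab: "a \<bullet> a = 1" "b \<bullet> b = 1" "a \<bullet> b = 0"
    using assms unfolding is_frame_def by (auto simp: norm_eq_1)
  then show "a \<bullet> a = 1" "b \<bullet> b = 1" "a \<bullet> b = 0" "b \<bullet> a = 0"
    by (auto simp: inner_commute)
  show "(a \<times> b) \<bullet> a = 0" "(a \<times> b) \<bullet> b = 0" "a \<bullet> (a \<times> b) = 0" "b \<bullet> (a \<times> b) = 0"
    by (simp_all add: dot_cross_self inner_commute)
  show "(a \<times> b) \<times> a = b"
    using Lagrange[of a a b] ab cross_skew[of "a \<times> b" a] by (simp add: inner_commute)
  show "(a \<times> b) \<times> b = - a"
    using Lagrange[of b a b] ab cross_skew[of "a \<times> b" b] by (simp add: inner_commute)
  show "(a \<times> b) \<bullet> (a \<times> b) = 1"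
    using dot_cross[of a b a b] ab by (simp add: inner_commute)
qed

lemma triple_product_expansion:
  fixes a b c x :: "real^3"
  shows "(a \<bullet> (b \<times> c)) *\<^sub>R x = (x \<bullet> a) *\<^sub>R (b \<times> c) + (x \<bullet> b) *\<^sub>R (c \<times> a) + (x \<bullet> c) *\<^sub>R (a \<times> b)"
  by (simp add: cross3_simps) (simp add: forall_3 ring_distribs)

lemma frame_expansion:
  assumes "is_frame a b"
  shows "x = (x \<bullet> a) *\<^sub>R a + (x \<bullet> b) *\<^sub>R b + (x \<bullet> (a \<times> b)) *\<^sub>R (a \<times> b)"
proof -
  have "b \<times> (a \<times> b) = a"
    using frame_identities(10)[OF assms] cross_skew[of b "a \<times> b"] by simp
  then show ?thesis
    using triple_product_expansion[of a b "a \<times> b" x] frame_identities(1,9)[OF assms] by simp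
qed

lemma frame_inner_expansion:
  assumes "is_frame a b"
  shows "x \<bullet> y = (x \<bullet> a) * (y \<bullet> a) + (x \<bullet> b) * (y \<bullet> b) + (x \<bullet> (a \<times> b)) * (y \<bullet> (a \<times> b))"
  using arg_cong[OF frame_expansion[OF assms, of y], of "\<lambda>z. x \<bullet> z"]
  by (simp add: inner_add_right algebra_simps)

lemma orthogonal_to_frame_imp_parallel_normal:
  assumes "is_frame a b" "z \<bullet> a = 0" "z \<bullet> b = 0"
  shows "z = (z \<bullet> (a \<times> b)) *\<^sub>R (a \<times> b)"
  using frame_expansion[OF assms(1), of z] assms(2,3) by simp

lemma in_plane_iff_orthogonal_normal:
  assumes f: "is_frame a b"
  shows "x \<in> plane a b \<longleftrightarrow> x \<bullet> (a \<times> b) = 0"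
proof
  assume "x \<in> plane a b"
  then obtain k l where "x = k *\<^sub>R a + l *\<^sub>R b"
    unfolding plane_def span_insert span_singleton by (auto simp: algebra_simps)
  then show "x \<bullet> (a \<times> b) = 0"
    using frame_identities[OF f] by (simp add: inner_add_left)
next
  assume "x \<bullet> (a \<times> b) = 0"
  then have "x = (x \<bullet> a) *\<^sub>R a + (x \<bullet> b) *\<^sub>R b"
    using frame_expansion[OF f, of x] by simp
  moreover have "(x \<bullet> a) *\<^sub>R a + (x \<bullet> b) *\<^sub>R b \<in> span {a, b}"
    by (intro span_add span_scale span_base) auto
  ultimately show "x \<in> plane a b"
    unfolding plane_def by simp
qed

lemma parallel_to_two_normals_imp_zero:
  fixes z n1 n2 :: "real^3"
  assumes "z = \<alpha> *\<^sub>R n1" "z = \<beta> *\<^sub>R n2" "n1 \<bullet> n1 = 1" "n2 \<bullet> n2 = 1" "\<bar>n1 \<bullet> n2\<bar> < 1"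
  shows "z = 0"
proof -
  have "\<alpha> = \<beta> * (n1 \<bullet> n2)"
    using arg_cong[OF assms(1), of "\<lambda>x. x \<bullet> n1"] assms(2,3) by (simp add: inner_commute)
  moreover have "\<beta> = \<alpha> * (n1 \<bullet> n2)"
    using arg_cong[OF assms(2), of "\<lambda>x. x \<bullet> n2"] assms(1,4) by simp
  ultimately have "\<alpha> * (1 - (n1 \<bullet> n2) * (n1 \<bullet> n2)) = 0"
    by (simp add: algebra_simps)
  moreover have "(n1 \<bullet> n2) * (n1 \<bullet> n2) < 1"
    using abs_square_less_1[of "n1 \<bullet> n2"] assms(5) by (simp add: power2_eq_square)
  ultimately show ?thesis
    using assms(1) by simp
qed

lemma inner_real2: "(p::real^2) \<bullet> q = p$1 * q$1 + p$2 * q$2"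
  by (simp add: inner_vec_def sum_2)

lemma embed_scaleR: "embed a b (c *\<^sub>R p) = c *\<^sub>R embed a b p"
  by (simp add: embed_def algebra_simps)

lemma embed_inner:
  assumes "is_frame a b"
  shows "embed a b p \<bullet> embed a b q = p \<bullet> q"
  using frame_identities[OF assms]
  by (simp add: embed_def inner_real2 inner_add_left inner_add_right algebra_simps)

lemma embed_orthogonal_normal:
  assumes "is_frame a b"
  shows "embed a b p \<bullet> (a \<times> b) = 0"
  using frame_identities[OF assms] by (simp add: embed_def inner_add_left)

lemma embed_in_plane: "is_frame a b \<Longrightarrow> embed a b p \<in> plane a b"
  using in_plane_iff_orthogonal_normal embed_orthogonal_normal by blast

lemma embed_orthogonal_imp_parallel_normal:
  assumes f: "is_frame a b" and d: "det2 p q \<noteq> 0"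
    and "z \<bullet> embed a b p = 0" "z \<bullet> embed a b q = 0"
  shows "z = (z \<bullet> (a \<times> b)) *\<^sub>R (a \<times> b)"
proof -
  have eqs: "p$1 * (z \<bullet> a) + p$2 * (z \<bullet> b) = 0" "q$1 * (z \<bullet> a) + q$2 * (z \<bullet> b) = 0"
    using assms(3,4) by (simp_all add: embed_def inner_add_right mult.commute)
  have "(z \<bullet> a) * det2 p q = q$2 * (p$1 * (z \<bullet> a) + p$2 * (z \<bullet> b)) - p$2 * (q$1 * (z \<bullet> a) + q$2 * (z \<bullet> b))"
    "(z \<bullet> b) * det2 p q = p$1 * (q$1 * (z \<bullet> a) + q$2 * (z \<bullet> b)) - q$1 * (p$1 * (z \<bullet> a) + p$2 * (z \<bullet> b))"
    by (simp_all add: det2_def algebra_simps)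
  then have "z \<bullet> a = 0" "z \<bullet> b = 0"
    unfolding eqs using d by simp_all
  then show ?thesis
    by (rule orthogonal_to_frame_imp_parallel_normal[OF f])
qed

lemma inner_square_add_det2_square: "(u \<bullet> w)\<^sup>2 + (det2 u w)\<^sup>2 = (u \<bullet> u) * (w \<bullet> w)"
  by (simp add: inner_real2 det2_def power2_eq_square algebra_simps)

text \<open>Inside the plane of a frame, the rotation by a right angle is the cross product with
  the normal; expanding both embedded vectors in the orthonormal pair \<open>w\<close>, \<open>n \<times> w\<close> shows that
  two frames glued along the common unit vector \<open>w\<close> have all mutual inner products
  determined by the cosine of the angle between their normals.\<close>

lemma embed_rotation:
  assumes "is_frame a b" "u \<bullet> u = 1"
  shows "embed a b p = (p \<bullet> u) *\<^sub>R embed a b u + det2 u p *\<^sub>R ((a \<times> b) \<times> embed a b u)"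
proof -
  have "(p \<bullet> u) *\<^sub>R embed a b u + det2 u p *\<^sub>R ((a \<times> b) \<times> embed a b u)
      = (p$1 * (u \<bullet> u)) *\<^sub>R a + (p$2 * (u \<bullet> u)) *\<^sub>R b"
    using frame_identities[OF assms(1)]
    by (simp add: embed_def inner_real2 det2_def cross_add_right cross_mult_right algebra_simps)
  then show ?thesis
    using assms(2) by (simp add: embed_def)
qed

lemma inner_embed_glued:
  assumes f: "is_frame a b" and f': "is_frame a' b'" and u: "u \<bullet> u = 1" and u': "u' \<bullet> u' = 1"
    and glue: "embed a b u = embed a' b' u'"
  shows "embed a b p \<bullet> embed a' b' q
    = (p \<bullet> u) * (q \<bullet> u') + det2 u p * det2 u' q * ((a \<times> b) \<bullet> (a' \<times> b'))"
proof -
  define w where "w = embed a b u"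
  have ww: "w \<bullet> w = 1"
    using embed_inner[OF f, of u u] u w_def by simp
  have wn: "(a \<times> b) \<bullet> w = 0" "w \<bullet> (a' \<times> b') = 0"
    using embed_orthogonal_normal[OF f, of u] embed_orthogonal_normal[OF f', of u'] glue w_def
    by (simp_all add: inner_commute)
  have "((a \<times> b) \<times> w) \<bullet> ((a' \<times> b') \<times> w) = (a \<times> b) \<bullet> (a' \<times> b')"
    using dot_cross[of "a \<times> b" w "a' \<times> b'" w] ww wn by simp
  then show ?thesis
    unfolding embed_rotation[OF f u, of p] embed_rotation[OF f' u', of q] glue[symmetric] w_def[symmetric]
    using ww dot_cross_self(3)[of "a \<times> b" w] dot_cross_self(2)[of w "a' \<times> b'"]
    by (simp add: inner_add_left inner_add_right algebra_simps)
qed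

lemma exists_frame_embedding:
  fixes p1 p2 :: "real^2" and w1 w2 :: "real^3"
  assumes d: "det2 p1 p2 \<noteq> 0"
    and g: "w1 \<bullet> w1 = p1 \<bullet> p1" "w2 \<bullet> w2 = p2 \<bullet> p2" "w1 \<bullet> w2 = p1 \<bullet> p2"
  shows "\<exists>a b. is_frame a b \<and> embed a b p1 = w1 \<and> embed a b p2 = w2"
proof -
  define L where "L x = det2 x p2 / det2 p1 p2" for x
  define M where "M x = det2 p1 x / det2 p1 p2" for x
  define f where "f x = L x *\<^sub>R w1 + M x *\<^sub>R w2" for x
  have cramer: "x = L x *\<^sub>R p1 + M x *\<^sub>R p2" for x
  proof -
    have "det2 p1 p2 *\<^sub>R x = det2 x p2 *\<^sub>R p1 + det2 p1 x *\<^sub>R p2"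
      by (simp add: vec_eq_iff forall_2 det2_def algebra_simps)
    then show ?thesis
      using d unfolding L_def M_def by (simp add: vec_eq_iff forall_2 field_simps)
  qed
  have isometric: "f x \<bullet> f y = x \<bullet> y" for x y
  proof -
    have "x \<bullet> y = (L x *\<^sub>R p1 + M x *\<^sub>R p2) \<bullet> (L y *\<^sub>R p1 + M y *\<^sub>R p2)"
      using cramer[of x] cramer[of y] by simp
    also have "\<dots> = f x \<bullet> f y"
      unfolding f_def using g by (simp add: inner_add_left inner_add_right inner_commute algebra_simps)
    finally show ?thesis by simp
  qed
  define a where "a = f (vector [1, 0])"
  define b where "b = f (vector [0, 1])"
  have "embed a b x = f x" for x
    unfolding embed_def a_def b_def f_def L_def M_def
    by (simp add: det2_def vector_2 algebra_simps diff_divide_distrib add_divide_distrib)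
  moreover have "is_frame a b"
    unfolding is_frame_def norm_eq_1 a_def b_def isometric by (simp add: inner_real2 vector_2)
  moreover have "f p1 = w1" "f p2 = w2"
    unfolding f_def L_def M_def using d by (simp_all add: det2_def)
  ultimately show ?thesis
    by blast
qed

lemma exists_unit_vectors_with_inner:
  fixes x y z s s' :: real
  assumes "x\<^sup>2 + s\<^sup>2 = 1" "y\<^sup>2 + s'\<^sup>2 = 1" "s \<noteq> 0" "\<bar>z - x * y\<bar> \<le> \<bar>s\<bar> * \<bar>s'\<bar>"
  shows "\<exists>w1 w2 w3 :: real^3. w1 \<bullet> w1 = 1 \<and> w2 \<bullet> w2 = 1 \<and> w3 \<bullet> w3 = 1 \<and>
           w1 \<bullet> w2 = x \<and> w1 \<bullet> w3 = y \<and> w2 \<bullet> w3 = z"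
proof -
  define t where "t = (z - x * y) / s"
  have "\<bar>t\<bar> \<le> \<bar>s'\<bar>"
    unfolding t_def using assms(3,4) by (simp add: abs_divide divide_le_eq mult.commute)
  then have "t\<^sup>2 \<le> s'\<^sup>2"
    by (metis abs_ge_zero power2_abs power_mono)
  then have r: "(sqrt (1 - y\<^sup>2 - t\<^sup>2))\<^sup>2 = 1 - y\<^sup>2 - t\<^sup>2"
    using assms(2) by simp
  have "x * y + s * t = z"
    unfolding t_def using assms(3) by simp
  then show ?thesis
    using assms(1,2) r
    by (intro exI[of _ "vector [1, 0, 0]"] exI[of _ "vector [x, s, 0]"]
          exI[of _ "vector [y, t, sqrt (1 - y\<^sup>2 - t\<^sup>2)]"])
       (simp add: inner_vec_def sum_3 power2_eq_square algebra_simps)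
qed

lemma products_eq_imp_sign_multiple:
  fixes f g :: "'t \<Rightarrow> real"
  assumes "\<forall>s\<in>S. \<forall>t\<in>S. g s * g t = f s * f t"
  obtains \<epsilon> where "\<epsilon> * \<epsilon> = 1" "\<forall>s\<in>S. g s = \<epsilon> * f s"
proof (cases "\<exists>s0\<in>S. f s0 \<noteq> 0")
  case True
  then obtain s0 where s0: "s0 \<in> S" "f s0 \<noteq> 0" by blast
  have sq: "g s0 * g s0 = f s0 * f s0"
    using assms s0(1) by blast
  have "g s * (f s0 * f s0) = f s * f s0 * g s0" if "s \<in> S" for s
    using assms that s0(1) sq by (metis mult.assoc mult.commute)
  then have "\<forall>s\<in>S. g s = (g s0 / f s0) * f s"
    using s0(2) by (auto simp: field_simps)
  moreover have "(g s0 / f s0) * (g s0 / f s0) = 1"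
    using sq s0(2) by (simp add: field_simps)
  ultimately show ?thesis
    using that by blast
next
  case False
  then have "\<forall>s\<in>S. g s = 1 * f s"
    using assms by auto
  then show ?thesis
    using that[of 1] by simp
qed

lemma orthogonal_matrix_of_inner_eq:
  fixes X Y :: "'t \<Rightarrow> real^3"
  assumes s1: "s1 \<in> S" and s2: "s2 \<in> S" and fr: "is_frame (X s1) (X s2)"
    and G: "\<forall>s\<in>S. \<forall>t\<in>S. X s \<bullet> X t = Y s \<bullet> Y t"
  shows "\<exists>A. orthogonal_matrix A \<and> (\<forall>s\<in>S. Y s = A *v X s)"
proof -
  define p1 p2 q1 q2 where "p1 = X s1" "p2 = X s2" "q1 = Y s1" "q2 = Y s2"
  have fp: "is_frame p1 p2"
    using fr p1_p2_q1_q2_def by simp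
  have fq: "is_frame q1 q2"
    using frame_identities(1-3)[OF fr] G s1 s2 unfolding is_frame_def p1_p2_q1_q2_def norm_eq_1 by metis
  have first_two: "X s \<bullet> p1 = Y s \<bullet> q1" "X s \<bullet> p2 = Y s \<bullet> q2" if "s \<in> S" for s
    using G that s1 s2 unfolding p1_p2_q1_q2_def by auto
  have "\<forall>s\<in>S. \<forall>t\<in>S. (Y s \<bullet> (q1 \<times> q2)) * (Y t \<bullet> (q1 \<times> q2)) = (X s \<bullet> (p1 \<times> p2)) * (X t \<bullet> (p1 \<times> p2))"
  proof (intro ballI)
    fix s t assume st: "s \<in> S" "t \<in> S"
    show "(Y s \<bullet> (q1 \<times> q2)) * (Y t \<bullet> (q1 \<times> q2)) = (X s \<bullet> (p1 \<times> p2)) * (X t \<bullet> (p1 \<times> p2))"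
      using frame_inner_expansion[OF fp, of "X s" "X t"] frame_inner_expansion[OF fq, of "Y s" "Y t"] G st
        first_two[OF st(1)] first_two[OF st(2)] by simp
  qed
  then obtain \<epsilon> where \<epsilon>: "\<epsilon> * \<epsilon> = 1" "\<forall>s\<in>S. Y s \<bullet> (q1 \<times> q2) = \<epsilon> * (X s \<bullet> (p1 \<times> p2))"
    by (rule products_eq_imp_sign_multiple)
  define f where "f x = (x \<bullet> p1) *\<^sub>R q1 + (x \<bullet> p2) *\<^sub>R q2 + (\<epsilon> * (x \<bullet> (p1 \<times> p2))) *\<^sub>R (q1 \<times> q2)" for x
  have lin: "linear f"
    unfolding linear_iff f_def by (simp add: inner_add_left algebra_simps)
  have "orthogonal_transformation f"
    unfolding orthogonal_transformation_def
  proof (intro conjI allI lin)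
    fix x y :: "real^3"
    have "f x \<bullet> f y = (x \<bullet> p1) * (y \<bullet> p1) + (x \<bullet> p2) * (y \<bullet> p2)
        + (\<epsilon> * \<epsilon>) * ((x \<bullet> (p1 \<times> p2)) * (y \<bullet> (p1 \<times> p2)))"
      unfolding f_def using frame_identities[OF fq]
      by (simp add: inner_add_left inner_add_right algebra_simps)
    then show "f x \<bullet> f y = x \<bullet> y"
      using frame_inner_expansion[OF fp, of x y] \<epsilon>(1) by simp
  qed
  then have "orthogonal_matrix (matrix f)"
    using orthogonal_transformation_matrix by blast
  moreover have "Y s = matrix f *v X s" if "s \<in> S" for s
  proof -
    have "f (X s) = (Y s \<bullet> q1) *\<^sub>R q1 + (Y s \<bullet> q2) *\<^sub>R q2 + (Y s \<bullet> (q1 \<times> q2)) *\<^sub>R (q1 \<times> q2)"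
      unfolding f_def using first_two[OF that] \<epsilon>(2) that by simp
    then show ?thesis
      using frame_expansion[OF fq, of "Y s"] matrix_vector_mul(2)[OF lin] by metis
  qed
  ultimately show ?thesis
    by blast
qed

lemma ang_unit_vectors:
  fixes u w :: "real^2"
  assumes "u \<bullet> u = 1" "w \<bullet> w = 1"
  shows "cos (ang u w) = u \<bullet> w" "sin (ang u w) = \<bar>det2 u w\<bar>" "0 \<le> ang u w" "ang u w \<le> pi"
proof -
  have ang: "ang u w = arccos (u \<bullet> w)"
    using assms unfolding ang_def by (simp add: norm_eq_1[symmetric])
  have bounds: "-1 \<le> u \<bullet> w" "u \<bullet> w \<le> 1"
    using Cauchy_Schwarz_ineq2[of u w] assms by (auto simp: norm_eq_1[symmetric])
  then show "cos (ang u w) = u \<bullet> w" "0 \<le> ang u w" "ang u w \<le> pi"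
    unfolding ang by (simp_all add: arccos_lbound arccos_ubound)
  have "sin (ang u w) = sqrt (1 - (u \<bullet> w)\<^sup>2)"
    unfolding ang using bounds by (simp add: sin_arccos)
  also have "1 - (u \<bullet> w)\<^sup>2 = (det2 u w)\<^sup>2"
    using inner_square_add_det2_square[of u w] assms by simp
  finally show "sin (ang u w) = \<bar>det2 u w\<bar>"
    by simp
qed

text \<open>The last inequality says that the spherical law of cosines,
  \<open>cos \<gamma> = cos \<alpha> cos \<beta> + sin \<alpha> sin \<beta> cos \<theta>\<close>, has a solution \<open>\<theta>\<close> strictly between \<open>0\<close> and \<open>\<pi>\<close>.\<close>

lemma sph_tri_strict_imp_cosine_bound:
  fixes \<alpha> \<beta> \<gamma> :: real
  assumes range: "0 \<le> \<alpha>" "\<alpha> \<le> pi" "0 \<le> \<beta>" "\<beta> \<le> pi" "0 \<le> \<gamma>" "\<gamma> \<le> pi"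
    and "sph_tri_strict \<alpha> \<beta> \<gamma>"
  shows "sin \<alpha> > 0" "sin \<beta> > 0" "\<bar>cos \<gamma> - cos \<alpha> * cos \<beta>\<bar> < sin \<alpha> * sin \<beta>"
proof -
  have tri: "\<beta> + \<gamma> > \<alpha>" "\<alpha> + \<gamma> > \<beta>" "\<alpha> + \<beta> > \<gamma>" "\<alpha> + \<beta> + \<gamma> < 2 * pi"
    using assms(7) unfolding sph_tri_strict_def by auto
  show "sin \<alpha> > 0" "sin \<beta> > 0"
    by (rule sin_gt_zero; use range tri in linarith)+
  have "cos \<gamma> < cos \<bar>\<alpha> - \<beta>\<bar>"
    by (rule cos_monotone_0_pi) (use range tri in linarith)+
  also have "cos \<bar>\<alpha> - \<beta>\<bar> = cos \<alpha> * cos \<beta> + sin \<alpha> * sin \<beta>"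
    by (simp add: abs_if cos_diff)
  finally have upper: "cos \<gamma> - cos \<alpha> * cos \<beta> < sin \<alpha> * sin \<beta>"
    by simp
  have "cos (\<alpha> + \<beta>) < cos \<gamma>"
  proof (cases "\<alpha> + \<beta> \<le> pi")
    case True
    show ?thesis
      by (rule cos_monotone_0_pi) (use range tri True in linarith)+
  next
    case False
    have "cos (2 * pi - (\<alpha> + \<beta>)) < cos \<gamma>"
      by (rule cos_monotone_0_pi) (use range tri False in linarith)+
    then show ?thesis
      by simp
  qed
  then have "- (sin \<alpha> * sin \<beta>) < cos \<gamma> - cos \<alpha> * cos \<beta>"
    by (simp add: cos_add)
  with upper show "\<bar>cos \<gamma> - cos \<alpha> * cos \<beta>\<bar> < sin \<alpha> * sin \<beta>"
    by linarith
qed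

text \<open>For unit common-line vectors, \<open>normal_cos u i j k\<close> is the cosine of the angle between
  the normals of the planes \<open>i\<close> and \<open>j\<close> forced by the spherical triangle \<open>i, j, k\<close>
  (spherical law of cosines).\<close>

definition normal_cos :: "(nat \<Rightarrow> nat \<Rightarrow> real^2) \<Rightarrow> nat \<Rightarrow> nat \<Rightarrow> nat \<Rightarrow> real" where
  "normal_cos u i j k =
     (u k i \<bullet> u k j - (u i j \<bullet> u i k) * (u j i \<bullet> u j k)) / (det2 (u i j) (u i k) * det2 (u j i) (u j k))"

definition admissible :: "nat \<Rightarrow> (nat \<Rightarrow> nat \<Rightarrow> real^2) \<Rightarrow> bool" where
  "admissible N u \<longleftrightarrow>
    (\<forall>i\<in>{1..N}. \<forall>j\<in>{1..N}. i \<noteq> j \<longrightarrow> u i j \<bullet> u i j = 1) \<and>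
    (\<forall>i\<in>{1..N}. \<forall>j\<in>{1..N}. \<forall>k\<in>{1..N}. distinct [i, j, k] \<longrightarrow>
       det2 (u i j) (u i k) \<noteq> 0 \<and> \<bar>normal_cos u i j k\<bar> < 1) \<and>
    (\<forall>i\<in>{1..N}. \<forall>j\<in>{1..N}. \<forall>k\<in>{1..N}. \<forall>m\<in>{1..N}. distinct [i, j, k, m] \<longrightarrow>
       normal_cos u i j k = normal_cos u i j m)"

lemma admissibleI:
  assumes "\<And>i j. i \<in> {1..N} \<Longrightarrow> j \<in> {1..N} \<Longrightarrow> i \<noteq> j \<Longrightarrow> u i j \<bullet> u i j = 1"
    and "\<And>i j k. i \<in> {1..N} \<Longrightarrow> j \<in> {1..N} \<Longrightarrow> k \<in> {1..N} \<Longrightarrow> distinct [i, j, k] \<Longrightarrow>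
      det2 (u i j) (u i k) \<noteq> 0"
    and "\<And>i j k. i \<in> {1..N} \<Longrightarrow> j \<in> {1..N} \<Longrightarrow> k \<in> {1..N} \<Longrightarrow> distinct [i, j, k] \<Longrightarrow>
      \<bar>normal_cos u i j k\<bar> < 1"
    and "\<And>i j k m. i \<in> {1..N} \<Longrightarrow> j \<in> {1..N} \<Longrightarrow> k \<in> {1..N} \<Longrightarrow> m \<in> {1..N} \<Longrightarrow>
      distinct [i, j, k, m] \<Longrightarrow> normal_cos u i j k = normal_cos u i j m"
  shows "admissible N u"
  using assms unfolding admissible_def by blast

lemma admissible_unit:
  "admissible N u \<Longrightarrow> i \<in> {1..N} \<Longrightarrow> j \<in> {1..N} \<Longrightarrow> i \<noteq> j \<Longrightarrow> u i j \<bullet> u i j = 1"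
  unfolding admissible_def by blast

lemma admissible_det2:
  "admissible N u \<Longrightarrow> i \<in> {1..N} \<Longrightarrow> j \<in> {1..N} \<Longrightarrow> k \<in> {1..N} \<Longrightarrow> distinct [i, j, k] \<Longrightarrow>
    det2 (u i j) (u i k) \<noteq> 0"
  unfolding admissible_def by blast

lemma admissible_normal_cos_bound:
  "admissible N u \<Longrightarrow> i \<in> {1..N} \<Longrightarrow> j \<in> {1..N} \<Longrightarrow> k \<in> {1..N} \<Longrightarrow> distinct [i, j, k] \<Longrightarrow>
    \<bar>normal_cos u i j k\<bar> < 1"
  unfolding admissible_def by blast

lemma admissible_normal_cos_eq:
  "admissible N u \<Longrightarrow> i \<in> {1..N} \<Longrightarrow> j \<in> {1..N} \<Longrightarrow> k \<in> {1..N} \<Longrightarrow> m \<in> {1..N} \<Longrightarrow>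
    distinct [i, j, k, m] \<Longrightarrow> normal_cos u i j k = normal_cos u i j m"
  unfolding admissible_def by blast

definition glued :: "(nat \<Rightarrow> real^3) \<Rightarrow> (nat \<Rightarrow> real^3) \<Rightarrow> (nat \<Rightarrow> nat \<Rightarrow> real^2) \<Rightarrow> nat \<Rightarrow> nat \<Rightarrow> bool" where
  "glued a b u i j \<longleftrightarrow> embed (a i) (b i) (u i j) = embed (a j) (b j) (u j i)"

lemma glued_sym: "glued a b u i j \<Longrightarrow> glued a b u j i"
  unfolding glued_def by simp

lemma realizes_imp_glued:
  "realizes N u a b \<Longrightarrow> i \<in> {1..N} \<Longrightarrow> j \<in> {1..N} \<Longrightarrow> i \<noteq> j \<Longrightarrow> glued a b u i j"
  unfolding realizes_def glued_def by blast

lemma frames_imp_is_frame: "frames N a b \<Longrightarrow> i \<in> {1..N} \<Longrightarrow> is_frame (a i) (b i)"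
  unfolding frames_def by blast

lemma normal_inner_eq_normal_cos:
  assumes u: "admissible N u" and idx: "i \<in> {1..N}" "j \<in> {1..N}" "k \<in> {1..N}" "distinct [i, j, k]"
    and f: "is_frame (a i) (b i)" "is_frame (a j) (b j)" "is_frame (a k) (b k)"
    and r: "glued a b u i j" "glued a b u i k" "glued a b u j k"
  shows "(a i \<times> b i) \<bullet> (a j \<times> b j) = normal_cos u i j k"
proof -
  have "u k i \<bullet> u k j = embed (a i) (b i) (u i k) \<bullet> embed (a j) (b j) (u j k)"
    using r(2,3) embed_inner[OF f(3)] unfolding glued_def by simp
  also have "\<dots> = (u i k \<bullet> u i j) * (u j k \<bullet> u j i)
      + det2 (u i j) (u i k) * det2 (u j i) (u j k) * ((a i \<times> b i) \<bullet> (a j \<times> b j))"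
    by (rule inner_embed_glued[OF f(1,2)])
      (use r(1) admissible_unit[OF u] idx in \<open>auto simp: glued_def\<close>)
  finally show ?thesis
    unfolding normal_cos_def using admissible_det2[OF u, of i j k] admissible_det2[OF u, of j i k] idx
    by (simp add: field_simps inner_commute)
qed

lemma normal_cos_eq_if_Lval_eq_0:
  assumes "Lval v i j k m = 0"
    and "det2 (unitv v i j) (unitv v i k) \<noteq> 0" "det2 (unitv v j i) (unitv v j k) \<noteq> 0"
    and "det2 (unitv v i j) (unitv v i m) \<noteq> 0" "det2 (unitv v j i) (unitv v j m) \<noteq> 0"
  shows "normal_cos (unitv v) i j k = normal_cos (unitv v) i j m"
proof -
  define u where "u = unitv v"
  define S where "S = det2 (u i j) (u i k) * det2 (u j i) (u j k)"
  define S' where "S' = det2 (u i j) (u i m) * det2 (u j i) (u j m)"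
  define X where "X = u k i \<bullet> u k j - (u i j \<bullet> u i k) * (u j i \<bullet> u j k)"
  define Y where "Y = u m i \<bullet> u m j - (u i j \<bullet> u i m) * (u j i \<bullet> u j m)"
  have "S \<noteq> 0" "S' \<noteq> 0"
    using assms(2-5) unfolding S_def S'_def u_def by auto
  moreover have "X * \<bar>S'\<bar> - sgn (S * S') * Y * \<bar>S\<bar> = 0"
    using assms(1) unfolding Lval_def Let_def u_def[symmetric] X_def Y_def S_def S'_def
    by (simp add: mult.commute mult.left_commute mult.assoc)
  ultimately have "X / S = Y / S'"
    by (cases "S > 0"; cases "S' > 0") (auto simp: sgn_mult field_simps abs_if split: if_splits)
  then show ?thesis
    unfolding normal_cos_def u_def[symmetric] X_def Y_def S_def S'_def .
qed

text \<open>Gluing propagates: if the planes \<open>k\<close> and \<open>m\<close> are glued to two non-parallel planes \<open>p\<close>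
  and \<open>q\<close>, they are glued to each other.  The gap between the two candidate common-line vectors
  is orthogonal to the planes \<open>p\<close> and \<open>q\<close>, because the normal cosine of \<open>m\<close> and \<open>p\<close> computed
  through \<open>q\<close> agrees with the one computed through \<open>k\<close>.\<close>

lemma glued_gap_orthogonal:
  assumes u: "admissible N u"
    and idx: "p \<in> {1..N}" "q \<in> {1..N}" "k \<in> {1..N}" "m \<in> {1..N}" "distinct [p, q, k, m]"
    and f: "is_frame (a p) (b p)" "is_frame (a q) (b q)" "is_frame (a k) (b k)" "is_frame (a m) (b m)"
    and r: "glued a b u p k" "glued a b u p m" "glued a b u p q" "glued a b u m q"
  shows "(embed (a k) (b k) (u k m) - embed (a m) (b m) (u m k)) \<bullet> embed (a p) (b p) (u p k) = 0"
proof -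
  have "(a m \<times> b m) \<bullet> (a p \<times> b p) = normal_cos u m p q"
    by (rule normal_inner_eq_normal_cos[OF u idx(4,1,2) _ f(4,1,2) glued_sym[OF r(2)] r(4) r(3)]) (use idx(5) in auto)
  also have "\<dots> = normal_cos u m p k"
    by (rule admissible_normal_cos_eq[OF u]) (use idx in auto)
  finally have n: "(a m \<times> b m) \<bullet> (a p \<times> b p) = normal_cos u m p k" .
  have "embed (a m) (b m) (u m k) \<bullet> embed (a p) (b p) (u p k)
      = (u m k \<bullet> u m p) * (u p k \<bullet> u p m)
        + det2 (u m p) (u m k) * det2 (u p m) (u p k) * ((a m \<times> b m) \<bullet> (a p \<times> b p))"
    by (rule inner_embed_glued[OF f(4,1)])
      (use r(2) admissible_unit[OF u] idx in \<open>auto simp: glued_def\<close>)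
  also have "\<dots> = u k m \<bullet> u k p"
    unfolding n normal_cos_def
    using admissible_det2[OF u, of m p k] admissible_det2[OF u, of p m k] idx
    by (simp add: field_simps inner_commute)
  also have "\<dots> = embed (a k) (b k) (u k m) \<bullet> embed (a p) (b p) (u p k)"
    using r(1) embed_inner[OF f(3)] unfolding glued_def by simp
  finally show ?thesis
    by (simp add: inner_diff_left)
qed

lemma glued_propagate:
  assumes u: "admissible N u"
    and idx: "p \<in> {1..N}" "q \<in> {1..N}" "k \<in> {1..N}" "m \<in> {1..N}" "distinct [p, q, k, m]"
    and f: "is_frame (a p) (b p)" "is_frame (a q) (b q)" "is_frame (a k) (b k)" "is_frame (a m) (b m)"
    and r: "glued a b u p k" "glued a b u p m" "glued a b u p q" "glued a b u q k" "glued a b u q m"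
  shows "glued a b u k m"
proof -
  have r': "glued a b u q p" "glued a b u k q" "glued a b u m q" "glued a b u k p" "glued a b u m p"
    using r by (simp_all add: glued_sym)
  have dist: "distinct [p, q, m, k]" "distinct [q, p, k, m]" "distinct [q, p, m, k]"
    using idx(5) by auto
  define z where "z = embed (a k) (b k) (u k m) - embed (a m) (b m) (u m k)"
  have "z \<bullet> embed (a p) (b p) (u p k) = 0"
    unfolding z_def by (rule glued_gap_orthogonal[OF u idx f r(1-3) r'(3)])
  moreover have "- z \<bullet> embed (a p) (b p) (u p m) = 0"
    unfolding z_def using glued_gap_orthogonal[OF u idx(1,2,4,3) dist(1) f(1,2,4,3) r(2,1,3) r'(2)]
    by (simp add: algebra_simps)
  ultimately have zp: "z = (z \<bullet> (a p \<times> b p)) *\<^sub>R (a p \<times> b p)"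
    using embed_orthogonal_imp_parallel_normal[OF f(1) admissible_det2[OF u idx(1,3,4)]] idx(5) by simp
  have "z \<bullet> embed (a q) (b q) (u q k) = 0"
    unfolding z_def by (rule glued_gap_orthogonal[OF u idx(2,1,3,4) dist(2) f(2,1,3,4) r(4,5) r'(1,5)])
  moreover have "- z \<bullet> embed (a q) (b q) (u q m) = 0"
    unfolding z_def using glued_gap_orthogonal[OF u idx(2,1,4,3) dist(3) f(2,1,4,3) r(5,4) r'(1,4)]
    by (simp add: algebra_simps)
  ultimately have zq: "z = (z \<bullet> (a q \<times> b q)) *\<^sub>R (a q \<times> b q)"
    using embed_orthogonal_imp_parallel_normal[OF f(2) admissible_det2[OF u idx(2,3,4)]] idx(5) by simp
  have "(a p \<times> b p) \<bullet> (a q \<times> b q) = normal_cos u p q k"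
    by (rule normal_inner_eq_normal_cos[OF u idx(1-3) _ f(1-3) r(3,1,4)]) (use idx(5) in auto)
  then have "\<bar>(a p \<times> b p) \<bullet> (a q \<times> b q)\<bar> < 1"
    using admissible_normal_cos_bound[OF u idx(1-3)] idx(5) by simp
  then have "z = 0"
    using parallel_to_two_normals_imp_zero[OF zp zq] frame_identities(11) f(1,2) by simp
  then show ?thesis
    unfolding z_def glued_def by simp
qed

lemma exists_glued_triangle:
  assumes u: "admissible N u" and idx: "i \<in> {1..N}" "j \<in> {1..N}" "k \<in> {1..N}" "distinct [i, j, k]"
  shows "\<exists>a b. is_frame (a i) (b i) \<and> is_frame (a j) (b j) \<and> glued a b u i j \<and>
           (a i \<times> b i) \<bullet> (a j \<times> b j) = normal_cos u i j k"
proof -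
  note unit = admissible_unit[OF u] and det = admissible_det2[OF u]
  have bound: "\<bar>u k i \<bullet> u k j - (u i j \<bullet> u i k) * (u j i \<bullet> u j k)\<bar>
      \<le> \<bar>det2 (u i j) (u i k)\<bar> * \<bar>det2 (u j i) (u j k)\<bar>"
    using admissible_normal_cos_bound[OF u idx] det[of i j k] det[of j i k] idx
    by (simp add: normal_cos_def abs_divide abs_mult divide_less_eq)
  have "(u i j \<bullet> u i k)\<^sup>2 + (det2 (u i j) (u i k))\<^sup>2 = 1" "(u j i \<bullet> u j k)\<^sup>2 + (det2 (u j i) (u j k))\<^sup>2 = 1"
    using inner_square_add_det2_square unit idx by auto
  \<comment> \<open>\<open>w1\<close>, \<open>w2\<close>, \<open>w3\<close> are to become the common lines of \<open>i, j\<close>, of \<open>i, k\<close> and of \<open>j, k\<close>\<close>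
  then obtain w1 w2 w3 :: "real^3" where w:
    "w1 \<bullet> w1 = 1" "w2 \<bullet> w2 = 1" "w3 \<bullet> w3 = 1"
    "w1 \<bullet> w2 = u i j \<bullet> u i k" "w1 \<bullet> w3 = u j i \<bullet> u j k" "w2 \<bullet> w3 = u k i \<bullet> u k j"
    using exists_unit_vectors_with_inner[OF _ _ _ bound] det[of i j k] idx by blast
  obtain ai bi where fi: "is_frame ai bi" "embed ai bi (u i j) = w1" "embed ai bi (u i k) = w2"
    using exists_frame_embedding[of "u i j" "u i k" w1 w2] w unit idx det[of i j k] by auto
  obtain aj bj where fj: "is_frame aj bj" "embed aj bj (u j i) = w1" "embed aj bj (u j k) = w3"
    using exists_frame_embedding[of "u j i" "u j k" w1 w3] w unit idx det[of j i k] by auto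
  obtain ak bk where fk: "is_frame ak bk" "embed ak bk (u k i) = w2" "embed ak bk (u k j) = w3"
    using exists_frame_embedding[of "u k i" "u k j" w2 w3] w unit idx det[of k i j] by auto
  define a where "a l = (if l = i then ai else if l = j then aj else ak)" for l
  define b where "b l = (if l = i then bi else if l = j then bj else bk)" for l
  have f: "is_frame (a i) (b i)" "is_frame (a j) (b j)" "is_frame (a k) (b k)"
    and r: "glued a b u i j" "glued a b u i k" "glued a b u j k"
    using idx(4) fi fj fk unfolding a_def b_def glued_def by auto
  then show ?thesis
    using normal_inner_eq_normal_cos[OF u idx f r] by blast
qed

lemma exists_frame_glued_to_pair:
  assumes u: "admissible N u" and idx: "i \<in> {1..N}" "j \<in> {1..N}" "k \<in> {1..N}" "distinct [i, j, k]"
    and f: "is_frame ai bi" "is_frame aj bj" and glue: "embed ai bi (u i j) = embed aj bj (u j i)"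
    and n: "(ai \<times> bi) \<bullet> (aj \<times> bj) = normal_cos u i j k"
  shows "\<exists>c d. is_frame c d \<and> embed c d (u k i) = embed ai bi (u i k) \<and> embed c d (u k j) = embed aj bj (u j k)"
proof (rule exists_frame_embedding)
  note unit = admissible_unit[OF u] and det = admissible_det2[OF u]
  have "embed ai bi (u i k) \<bullet> embed aj bj (u j k)
      = (u i k \<bullet> u i j) * (u j k \<bullet> u j i) + det2 (u i j) (u i k) * det2 (u j i) (u j k) * normal_cos u i j k"
    using inner_embed_glued[OF f unit unit glue] idx n by auto
  also have "\<dots> = u k i \<bullet> u k j"
    unfolding normal_cos_def using det[of i j k] det[of j i k] idx by (simp add: field_simps inner_commute)
  finally show "embed ai bi (u i k) \<bullet> embed aj bj (u j k) = u k i \<bullet> u k j" .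
  show "det2 (u k i) (u k j) \<noteq> 0"
    using det[of k i j] idx by auto
  show "embed ai bi (u i k) \<bullet> embed ai bi (u i k) = u k i \<bullet> u k i"
    "embed aj bj (u j k) \<bullet> embed aj bj (u j k) = u k j \<bullet> u k j"
    using embed_inner[OF f(1)] embed_inner[OF f(2)] unit idx by auto
qed

lemma realizes_if_glued_to_first_two:
  assumes u: "admissible N u" and N: "N \<ge> 3" and f: "frames N a b"
    and g12: "glued a b u 1 2" and g: "\<And>k. k \<in> {3..N} \<Longrightarrow> glued a b u 1 k \<and> glued a b u 2 k"
  shows "realizes N u a b"
proof -
  have idx: "1 \<in> {1..N}" "2 \<in> {1..N}"
    using N by auto
  have "glued a b u i j" if ij: "i \<in> {1..N}" "j \<in> {1..N}" "i \<noteq> j" for i j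
  proof (cases "i \<in> {3..N} \<and> j \<in> {3..N}")
    case True
    show ?thesis
      by (rule glued_propagate[OF u idx ij(1,2) _ frames_imp_is_frame[OF f]
            frames_imp_is_frame[OF f] frames_imp_is_frame[OF f] frames_imp_is_frame[OF f]])
        (use True ij idx g g12 in auto)
  next
    case False
    then consider "i \<in> {1, 2}" "j \<in> {1, 2}" | "i \<in> {1, 2}" "j \<in> {3..N}" | "i \<in> {3..N}" "j \<in> {1, 2}"
      using ij by fastforce
    then show ?thesis
      using ij g g12 glued_sym[OF g12] glued_sym g by cases (auto simp: glued_sym)
  qed
  then show ?thesis
    unfolding realizes_def glued_def by blast
qed

lemma exists_realizing_frames:
  assumes u: "admissible N u" and N: "N \<ge> 3"
  shows "\<exists>a b. frames N a b \<and> realizes N u a b"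
proof -
  have idx: "1 \<in> {1..N}" "2 \<in> {1..N}" "3 \<in> {1..N}"
    using N by auto
  obtain a0 b0 where f12: "is_frame (a0 1) (b0 1)" "is_frame (a0 2) (b0 2)" and g12: "glued a0 b0 u 1 2"
    and n12: "(a0 1 \<times> b0 1) \<bullet> (a0 2 \<times> b0 2) = normal_cos u 1 2 3"
    using exists_glued_triangle[OF u idx] by auto
  have "\<exists>cd. is_frame (fst cd) (snd cd) \<and> embed (fst cd) (snd cd) (u k 1) = embed (a0 1) (b0 1) (u 1 k)
            \<and> embed (fst cd) (snd cd) (u k 2) = embed (a0 2) (b0 2) (u 2 k)"
    if k: "k \<in> {3..N}" for k
  proof -
    have "normal_cos u 1 2 3 = normal_cos u 1 2 k"
      using admissible_normal_cos_eq[OF u, of 1 2 3 k] idx k by (cases "k = 3") auto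
    then show ?thesis
      using exists_frame_glued_to_pair[OF u idx(1,2), of k] f12 g12 n12 k unfolding glued_def by auto
  qed
  then obtain cd where cd: "\<forall>k\<in>{3..N}. is_frame (fst (cd k)) (snd (cd k))
      \<and> embed (fst (cd k)) (snd (cd k)) (u k 1) = embed (a0 1) (b0 1) (u 1 k)
      \<and> embed (fst (cd k)) (snd (cd k)) (u k 2) = embed (a0 2) (b0 2) (u 2 k)"
    by metis
  define a where "a k = (if k \<le> 2 then a0 k else fst (cd k))" for k
  define b where "b k = (if k \<le> 2 then b0 k else snd (cd k))" for k
  have f: "frames N a b"
    unfolding frames_def
  proof
    fix k assume "k \<in> {1..N}"
    then consider "k = 1" | "k = 2" | "k \<in> {3..N}"
      by fastforce
    then show "is_frame (a k) (b k)"
      using cd f12 unfolding a_def b_def by cases auto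
  qed
  moreover have "glued a b u 1 2"
    using g12 unfolding glued_def a_def b_def by simp
  moreover have "glued a b u 1 k \<and> glued a b u 2 k" if "k \<in> {3..N}" for k
    using cd that unfolding glued_def a_def b_def by auto
  ultimately show ?thesis
    using realizes_if_glued_to_first_two[OF u N] by blast
qed

lemma third_index:
  assumes "N \<ge> 3"
  obtains k :: nat where "k \<in> {1..N}" "k \<noteq> i" "k \<noteq> j"
proof -
  have "\<exists>k\<in>{1::nat, 2, 3}. k \<noteq> i \<and> k \<noteq> j"
    by auto
  then show ?thesis
    using assms that by force
qed

lemma realizing_normals_inner:
  assumes u: "admissible N u" and f: "frames N a b" and r: "realizes N u a b"
    and idx: "i \<in> {1..N}" "j \<in> {1..N}" "k \<in> {1..N}" "distinct [i, j, k]"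
  shows "(a i \<times> b i) \<bullet> (a j \<times> b j) = normal_cos u i j k"
  by (rule normal_inner_eq_normal_cos[OF u idx])
    (use idx frames_imp_is_frame[OF f] realizes_imp_glued[OF r] in auto)

lemma realizing_normals_not_parallel:
  assumes u: "admissible N u" and N: "N \<ge> 3" and f: "frames N a b" and r: "realizes N u a b"
    and idx: "i \<in> {1..N}" "j \<in> {1..N}" "i \<noteq> j"
  shows "a i \<times> b i \<noteq> c *\<^sub>R (a j \<times> b j)"
proof
  assume parallel: "a i \<times> b i = c *\<^sub>R (a j \<times> b j)"
  obtain k where k: "k \<in> {1..N}" "k \<noteq> i" "k \<noteq> j"
    using third_index[OF N] by blast
  have lt: "\<bar>(a i \<times> b i) \<bullet> (a j \<times> b j)\<bar> < 1"
    using realizing_normals_inner[OF u f r idx(1,2) k(1)] admissible_normal_cos_bound[OF u idx(1,2) k(1)]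
      idx k by simp
  have "a i \<times> b i = 0"
    by (rule parallel_to_two_normals_imp_zero[of _ 1 _ c, OF _ parallel _ _ lt])
      (use frame_identities(11) frames_imp_is_frame[OF f] idx in auto)
  then show False
    using frame_identities(11)[OF frames_imp_is_frame[OF f idx(1)]] by simp
qed

lemma realizing_planes_distinct:
  assumes u: "admissible N u" and N: "N \<ge> 3" and f: "frames N a b" and r: "realizes N u a b"
    and ij: "i \<in> {1..N}" "j \<in> {1..N}" "i \<noteq> j"
  shows "plane (a i) (b i) \<noteq> plane (a j) (b j)"
proof
  assume "plane (a i) (b i) = plane (a j) (b j)"
  then have "a i \<in> plane (a j) (b j)" "b i \<in> plane (a j) (b j)"
    unfolding plane_def by (metis insertCI span_base)+
  then have "a i \<bullet> (a j \<times> b j) = 0" "b i \<bullet> (a j \<times> b j) = 0"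
    using in_plane_iff_orthogonal_normal[OF frames_imp_is_frame[OF f ij(2)]] by auto
  then show False
    using orthogonal_to_frame_imp_parallel_normal[OF frames_imp_is_frame[OF f ij(1)], of "a j \<times> b j"]
      realizing_normals_not_parallel[OF u N f r ij(2,1)] ij(3) by (simp add: inner_commute)
qed

text \<open>If the line of \<open>i, j\<close> were also the line of \<open>k, l\<close>, the plane of an index \<open>s \<in> {k, l}\<close> other
  than \<open>i, j\<close> would contain the common lines of \<open>i\<close> with both \<open>j\<close> and \<open>s\<close>, hence the whole plane \<open>i\<close>.\<close>

lemma realizing_common_lines_distinct:
  assumes u: "admissible N u" and N: "N \<ge> 3" and f: "frames N a b" and r: "realizes N u a b"
    and idx: "i \<in> {1..N}" "j \<in> {1..N}" "k \<in> {1..N}" "l \<in> {1..N}"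
    and ord: "i < j" "k < l" "(i, j) \<noteq> (k, l)"
  shows "plane (a i) (b i) \<inter> plane (a j) (b j) \<noteq> plane (a k) (b k) \<inter> plane (a l) (b l)"
proof
  note frame = frames_imp_is_frame[OF f]
  assume same_line: "plane (a i) (b i) \<inter> plane (a j) (b j) = plane (a k) (b k) \<inter> plane (a l) (b l)"
  obtain s where s: "s \<in> {k, l}" "s \<noteq> i" "s \<noteq> j"
    using ord by (metis insertCI less_asym)
  have sN: "s \<in> {1..N}"
    using s idx by auto
  have "embed (a i) (b i) (u i j) = embed (a j) (b j) (u j i)"
    using realizes_imp_glued[OF r idx(1,2)] ord unfolding glued_def by simp
  then have "embed (a i) (b i) (u i j) \<in> plane (a k) (b k) \<inter> plane (a l) (b l)"
    using embed_in_plane frame idx same_line by (metis IntI)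
  then have "(a s \<times> b s) \<bullet> embed (a i) (b i) (u i j) = 0"
    using s in_plane_iff_orthogonal_normal[OF frame[OF sN]] by (auto simp: inner_commute)
  moreover have "(a s \<times> b s) \<bullet> embed (a i) (b i) (u i s) = 0"
    using realizes_imp_glued[OF r idx(1) sN] s embed_orthogonal_normal[OF frame[OF sN]]
    unfolding glued_def by (simp add: inner_commute)
  moreover have "det2 (u i j) (u i s) \<noteq> 0"
    using admissible_det2[OF u idx(1,2) sN] s ord by simp
  ultimately have "a s \<times> b s = ((a s \<times> b s) \<bullet> (a i \<times> b i)) *\<^sub>R (a i \<times> b i)"
    using embed_orthogonal_imp_parallel_normal[OF frame[OF idx(1)]] by blast
  then show False
    using realizing_normals_not_parallel[OF u N f r sN idx(1)] s by blast
qed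

lemma realizing_frames_generic:
  assumes "admissible N u" "N \<ge> 3" "frames N a b" "realizes N u a b"
  shows "generic N a b"
  unfolding generic_def
  using realizing_planes_distinct[OF assms] realizing_common_lines_distinct[OF assms] by blast

lemma realizing_frames_inner_embed_eq:
  assumes u: "admissible N u" and N: "N \<ge> 3"
    and f: "frames N a b" "frames N a' b'" and r: "realizes N u a b" "realizes N u a' b'"
    and idx: "i \<in> {1..N}" "j \<in> {1..N}"
  shows "embed (a i) (b i) p \<bullet> embed (a j) (b j) q = embed (a' i) (b' i) p \<bullet> embed (a' j) (b' j) q"
proof (cases "i = j")
  case True
  then show ?thesis
    using embed_inner frames_imp_is_frame f idx by simp
next
  case False
  obtain k where k: "k \<in> {1..N}" "k \<noteq> i" "k \<noteq> j"
    using third_index[OF N] by blast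
  have unit: "u i j \<bullet> u i j = 1" "u j i \<bullet> u j i = 1"
    using admissible_unit[OF u] idx False by auto
  have "(a i \<times> b i) \<bullet> (a j \<times> b j) = (a' i \<times> b' i) \<bullet> (a' j \<times> b' j)"
    using realizing_normals_inner[OF u f(1) r(1) idx k(1)] realizing_normals_inner[OF u f(2) r(2) idx k(1)]
      False k by simp
  then show ?thesis
    using inner_embed_glued[OF frames_imp_is_frame[OF f(1) idx(1)] frames_imp_is_frame[OF f(1) idx(2)] unit]
      inner_embed_glued[OF frames_imp_is_frame[OF f(2) idx(1)] frames_imp_is_frame[OF f(2) idx(2)] unit]
      realizes_imp_glued[OF r(1) idx False] realizes_imp_glued[OF r(2) idx False]
    unfolding glued_def by simp
qed

lemma realizing_frames_unique:
  assumes u: "admissible N u" and N: "N \<ge> 3"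
    and f: "frames N a b" "frames N a' b'" and r: "realizes N u a b" "realizes N u a' b'"
  shows "\<exists>A :: real^3^3. orthogonal_matrix A \<and> (\<forall>i\<in>{1..N}. a' i = A *v a i \<and> b' i = A *v b i)"
proof -
  define e :: "bool \<Rightarrow> real^2" where "e t = (if t then vector [1, 0] else vector [0, 1])" for t
  define X where "X s = embed (a (fst s)) (b (fst s)) (e (snd s))" for s :: "nat \<times> bool"
  define Y where "Y s = embed (a' (fst s)) (b' (fst s)) (e (snd s))" for s :: "nat \<times> bool"
  have XY: "X (i, True) = a i" "X (i, False) = b i" "Y (i, True) = a' i" "Y (i, False) = b' i" for i
    unfolding X_def Y_def e_def embed_def by simp_all
  define S where "S = Sigma {1..N} (\<lambda>_. UNIV :: bool set)"
  have gram: "\<forall>s\<in>S. \<forall>t\<in>S. X s \<bullet> X t = Y s \<bullet> Y t"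
  proof (intro ballI)
    fix s t assume "s \<in> S" "t \<in> S"
    then show "X s \<bullet> X t = Y s \<bullet> Y t"
      unfolding X_def Y_def S_def by (intro realizing_frames_inner_embed_eq[OF u N f r]) auto
  qed
  have base: "(1, True) \<in> S" "(1, False) \<in> S"
    unfolding S_def using N by auto
  have "is_frame (X (1, True)) (X (1, False))"
    unfolding XY using frames_imp_is_frame[OF f(1)] N by simp
  then obtain A where A: "orthogonal_matrix A" "\<forall>s\<in>S. Y s = A *v X s"
    using orthogonal_matrix_of_inner_eq[OF base _ gram] by blast
  have "a' i = A *v a i \<and> b' i = A *v b i" if "i \<in> {1..N}" for i
    using A(2) XY[of i] that unfolding S_def by simp
  then show ?thesis
    using A(1) by blast
qed

lemma common_lines_data_nonzero:
  assumes "common_lines_data N v" "i \<in> {1..N}" "j \<in> {1..N}" "i \<noteq> j"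
  shows "v i j \<noteq> 0" "norm (v j i) = norm (v i j)"
proof -
  have "(v i j, v j i) \<noteq> (0, 0)" "(norm (v i j))\<^sup>2 = (norm (v j i))\<^sup>2"
    using assms unfolding common_lines_data_def by blast+
  then show "norm (v j i) = norm (v i j)" "v i j \<noteq> 0"
    by (auto simp: power2_eq_iff_nonneg)
qed

lemma unitv_unit:
  "common_lines_data N v \<Longrightarrow> i \<in> {1..N} \<Longrightarrow> j \<in> {1..N} \<Longrightarrow> i \<noteq> j \<Longrightarrow> unitv v i j \<bullet> unitv v i j = 1"
  using common_lines_data_nonzero(1) unfolding unitv_def norm_eq_1[symmetric] by simp

text \<open>Both vectors of the pair \<open>(i, j)\<close> have the same norm, so normalising them is a rescaling of
  the representative of \<open>[v\<^sub>i\<^sub>j : v\<^sub>j\<^sub>i]\<close>.\<close>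

lemma unitv_pair_scaleR:
  assumes "common_lines_data N v" "i \<in> {1..N}" "j \<in> {1..N}" "i \<noteq> j"
  shows "unitv v i j = (1 / norm (v i j)) *\<^sub>R v i j" "unitv v j i = (1 / norm (v i j)) *\<^sub>R v j i"
  using common_lines_data_nonzero[OF assms] unfolding unitv_def by simp_all

lemma realizes_unitv_iff:
  assumes "common_lines_data N v"
  shows "realizes N (unitv v) a b \<longleftrightarrow> realizes N v a b"
  unfolding realizes_def
  using unitv_pair_scaleR[OF assms] common_lines_data_nonzero(1)[OF assms]
  by (auto simp: embed_scaleR)

lemma triple_strict_unitv:
  assumes v: "common_lines_data N v" and idx: "i \<in> {1..N}" "j \<in> {1..N}" "k \<in> {1..N}" "distinct [i, j, k]"
    and "triple_strict v i j k"
  shows "det2 (unitv v i j) (unitv v i k) \<noteq> 0" "\<bar>normal_cos (unitv v) i j k\<bar> < 1"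
proof -
  define u where "u = unitv v"
  have ne: "i \<noteq> j" "i \<noteq> k" "j \<noteq> k"
    using idx(4) by auto
  have "sph_tri_strict (ang (u i j) (u i k)) (ang (u j i) (u j k)) (ang (u k i) (u k j))"
    unfolding u_def unitv_pair_scaleR[OF v idx(1,2) ne(1)] unitv_pair_scaleR[OF v idx(1,3) ne(2)]
      unitv_pair_scaleR[OF v idx(2,3) ne(3)]
    using assms(6)[unfolded triple_strict_def, rule_format, of "1 / norm (v i j)" "1 / norm (v i k)"
        "1 / norm (v j k)"] common_lines_data_nonzero(1)[OF v] idx ne
    by simp
  moreover have unit: "u i j \<bullet> u i j = 1" "u i k \<bullet> u i k = 1" "u j i \<bullet> u j i = 1" "u j k \<bullet> u j k = 1"
    "u k i \<bullet> u k i = 1" "u k j \<bullet> u k j = 1"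
    using unitv_unit[OF v] idx ne unfolding u_def by auto
  ultimately have "sin (ang (u i j) (u i k)) > 0" "sin (ang (u j i) (u j k)) > 0"
    "\<bar>cos (ang (u k i) (u k j)) - cos (ang (u i j) (u i k)) * cos (ang (u j i) (u j k))\<bar>
       < sin (ang (u i j) (u i k)) * sin (ang (u j i) (u j k))"
    using sph_tri_strict_imp_cosine_bound[OF ang_unit_vectors(3,4)[OF unit(1,2)]
        ang_unit_vectors(3,4)[OF unit(3,4)] ang_unit_vectors(3,4)[OF unit(5,6)]] by simp_all
  then have "det2 (u i j) (u i k) \<noteq> 0" "det2 (u j i) (u j k) \<noteq> 0"
    "\<bar>u k i \<bullet> u k j - (u i j \<bullet> u i k) * (u j i \<bullet> u j k)\<bar> < \<bar>det2 (u i j) (u i k)\<bar> * \<bar>det2 (u j i) (u j k)\<bar>"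
    unfolding ang_unit_vectors(1,2)[OF unit(1,2)] ang_unit_vectors(1,2)[OF unit(3,4)]
      ang_unit_vectors(1,2)[OF unit(5,6)] by auto
  then show "det2 (unitv v i j) (unitv v i k) \<noteq> 0" "\<bar>normal_cos (unitv v) i j k\<bar> < 1"
    unfolding u_def[symmetric] normal_cos_def by (simp_all add: abs_divide abs_mult divide_less_eq)
qed

lemma admissible_unitv:
  assumes v: "common_lines_data N v"
    and tri: "\<forall>i\<in>{1..N}. \<forall>j\<in>{1..N}. \<forall>k\<in>{1..N}. distinct [i, j, k] \<longrightarrow> triple_strict v i j k"
    and L: "\<forall>i\<in>{1..N}. \<forall>j\<in>{1..N}. \<forall>k\<in>{1..N}. \<forall>m\<in>{1..N}. distinct [i, j, k, m] \<longrightarrow> Lval v i j k m = 0"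
  shows "admissible N (unitv v)"
proof (rule admissibleI)
  fix i j k
  assume idx: "i \<in> {1..N}" "j \<in> {1..N}" "k \<in> {1..N}" "distinct [i, j, k]"
  have "triple_strict v i j k"
    using tri idx by simp
  then show "det2 (unitv v i j) (unitv v i k) \<noteq> 0" "\<bar>normal_cos (unitv v) i j k\<bar> < 1"
    using triple_strict_unitv[OF v idx] by simp_all
next
  fix i j k m
  assume idx: "i \<in> {1..N}" "j \<in> {1..N}" "k \<in> {1..N}" "m \<in> {1..N}" "distinct [i, j, k, m]"
  have dist: "distinct [i, j, k]" "distinct [j, i, k]" "distinct [i, j, m]" "distinct [j, i, m]"
    using idx(5) by auto
  have "triple_strict v i j k" "triple_strict v j i k" "triple_strict v i j m" "triple_strict v j i m"
    using tri idx(1-4) dist by simp_all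
  then have "det2 (unitv v i j) (unitv v i k) \<noteq> 0" "det2 (unitv v j i) (unitv v j k) \<noteq> 0"
    "det2 (unitv v i j) (unitv v i m) \<noteq> 0" "det2 (unitv v j i) (unitv v j m) \<noteq> 0"
    using triple_strict_unitv(1)[OF v idx(1,2,3) dist(1)] triple_strict_unitv(1)[OF v idx(2,1,3) dist(2)]
      triple_strict_unitv(1)[OF v idx(1,2,4) dist(3)] triple_strict_unitv(1)[OF v idx(2,1,4) dist(4)]
    by simp_all
  moreover have "Lval v i j k m = 0"
    using L idx by simp
  ultimately show "normal_cos (unitv v) i j k = normal_cos (unitv v) i j m"
    using normal_cos_eq_if_Lval_eq_0 by blast
qed (rule unitv_unit[OF v])

theorem theorem1:
  fixes N :: nat and v :: "nat \<Rightarrow> nat \<Rightarrow> real^2"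
  assumes "N \<ge> 3"
    and "common_lines_data N v"
    and "\<forall>i\<in>{1..N}. \<forall>j\<in>{1..N}. \<forall>k\<in>{1..N}. distinct [i, j, k] \<longrightarrow> triple_strict v i j k"
    and "\<forall>i\<in>{1..N}. \<forall>j\<in>{1..N}. \<forall>k\<in>{1..N}. \<forall>m\<in>{1..N}.
           distinct [i, j, k, m] \<longrightarrow> Lval v i j k m = 0"
  shows "(\<exists>a b. frames N a b \<and> generic N a b \<and> realizes N v a b) \<and>
         (\<forall>a b a' b'. frames N a b \<and> generic N a b \<and> realizes N v a b \<longrightarrow>
                      frames N a' b' \<and> generic N a' b' \<and> realizes N v a' b' \<longrightarrow>
            (\<exists>A :: real^3^3. orthogonal_matrix A \<and>
               (\<forall>i\<in>{1..N}. a' i = A *v a i \<and> b' i = A *v b i)))"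
proof -
  have u: "admissible N (unitv v)"
    using admissible_unitv assms(2-4) by blast
  note realizes = realizes_unitv_iff[OF assms(2), symmetric]
  show ?thesis
  proof (intro conjI allI impI)
    obtain a b where "frames N a b" "realizes N (unitv v) a b"
      using exists_realizing_frames[OF u assms(1)] by blast
    then show "\<exists>a b. frames N a b \<and> generic N a b \<and> realizes N v a b"
      using realizing_frames_generic[OF u assms(1)] unfolding realizes by blast
  next
    fix a b a' b'
    assume "frames N a b \<and> generic N a b \<and> realizes N v a b"
      and "frames N a' b' \<and> generic N a' b' \<and> realizes N v a' b'"
    then show "\<exists>A :: real^3^3. orthogonal_matrix A \<and> (\<forall>i\<in>{1..N}. a' i = A *v a i \<and> b' i = A *v b i)"
      using realizing_frames_unique[OF u assms(1)] unfolding realizes by blast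
  qed
qed

end
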